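(* For every integer $n\ge1$, \[ p(n,n-1)=\tfrac12\,n(n-1),\qquad u(n,n-1)=\tfrac12\,(n-1)(n-2). \]
   Context: $p(n,l)$ is the number of isomorphism classes of posets with $n$ elements whose longest chain has exactly $l$ elements; $u(n,l)$ is the number of those which are locally unsymmetric. Definitions: $\ell(X)$ is the cardinality of a longest chain of a poset $X$. A subset $A$ of a poset $X$ is maximally ordered in $X$ if $|\{(a,b)\in A\times A:a<b\}|$ is maximal among subsets of $X$ of cardinality $|A|$. For $\sigma\in\mathrm{Aut}(P)$, $\Sigma(\sigma)=\{a:\sigma(a)\ne a\}$. For a finite poset $Q$ and $r\ge2$: $\sigma$ is a $(Q,r)$-generator if there exist subsets $S_0,\dots,S_{r-1}\subset\Sigma(\sigma)$, each isomorphic to $Q$, which are smallest maximally ordered subsets of $\Sigma(\sigma)$ with $\sigma(S_i)=S_{(i+1)\bmod r}$, $\ell(S_i)=\ell(\Sigma(\sigma))$, $\bigcup_iS_i=\Sigma(\sigma)$; distinct $S_i,S_j$ are $(Q,r)$-symmetric subsets. Elements $a,b$ are $(Q,r,0)$-symmetric if $a=b$; $(Q,r,1)$-symmetric if there are $(Q,r)$-symmetric subsets $A,B$ with generator $\sigma$, $a\in A$, $b=\sigma^q(a)\in B$, $1\le q<r$; for $m\ge2$, $(Q,r,m)$-symmetric if not $(Q,r,j)$-symmetric for $j<m$ but there exist $c$, $j<m$ with $a$ $(Q,r,j)$-symmetric to $c$ and $c$ $(Q,r,m-j)$-symmetric to $b$; $(Q,r)$-symmetric if $(Q,r,m)$-symmetric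 for some $m\ge0$ (an equivalence relation). $P\oslash_rQ$ is the quotient poset of equivalence classes with $E\le F$ iff some $e\in E$, $f\in F$ satisfy $e\le f$. A poset $P$ is locally symmetric if $P\oslash_rQ\not\cong P$ for some finite poset $Q$ and some $r\ge2$; it is locally unsymmetric otherwise. *)

theory Defs
  imports Complex_Main
begin

definition is_poset :: "'a set \<Rightarrow> ('a \<Rightarrow> 'a \<Rightarrow> bool) \<Rightarrow> bool" where
  "is_poset A le \<longleftrightarrow>
     (\<forall>x y. le x y \<longrightarrow> x \<in> A \<and> y \<in> A) \<and>
     (\<forall>x\<in>A. le x x) \<and>
     (\<forall>x\<in>A. \<forall>y\<in>A. le x y \<and> le y x \<longrightarrow> x = y) \<and>
     (\<forall>x\<in>A. \<forall>y\<in>A. \<forall>z\<in>A. le x y \<and> le y z \<longrightarrow> le x z)"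

definition iso_btw :: "('a \<Rightarrow> 'b) \<Rightarrow> 'a set \<Rightarrow> ('a \<Rightarrow> 'a \<Rightarrow> bool) \<Rightarrow> 'b set \<Rightarrow> ('b \<Rightarrow> 'b \<Rightarrow> bool) \<Rightarrow> bool" where
  "iso_btw f A leA B leB \<longleftrightarrow> bij_betw f A B \<and> (\<forall>x\<in>A. \<forall>y\<in>A. leA x y \<longleftrightarrow> leB (f x) (f y))"

definition isomorphic :: "'a set \<Rightarrow> ('a \<Rightarrow> 'a \<Rightarrow> bool) \<Rightarrow> 'b set \<Rightarrow> ('b \<Rightarrow> 'b \<Rightarrow> bool) \<Rightarrow> bool" where
  "isomorphic A leA B leB \<longleftrightarrow> (\<exists>f. iso_btw f A leA B leB)"

definition is_chain :: "'a set \<Rightarrow> ('a \<Rightarrow> 'a \<Rightarrow> bool) \<Rightarrow> bool" where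
  "is_chain C le \<longleftrightarrow> (\<forall>x\<in>C. \<forall>y\<in>C. le x y \<or> le y x)"

definition height :: "'a set \<Rightarrow> ('a \<Rightarrow> 'a \<Rightarrow> bool) \<Rightarrow> nat" where
  "height X le = Max {card C | C. C \<subseteq> X \<and> is_chain C le}"

definition ord_pairs :: "'a set \<Rightarrow> ('a \<Rightarrow> 'a \<Rightarrow> bool) \<Rightarrow> nat" where
  "ord_pairs A le = card {(a, b). a \<in> A \<and> b \<in> A \<and> le a b \<and> a \<noteq> b}"

definition max_ordered :: "'a set \<Rightarrow> ('a \<Rightarrow> 'a \<Rightarrow> bool) \<Rightarrow> 'a set \<Rightarrow> bool" where
  "max_ordered X le A \<longleftrightarrow> A \<subseteq> X \<and>
     (\<forall>B. B \<subseteq> X \<and> card B = card A \<longrightarrow> ord_pairs B le \<le> ord_pairs A le)"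

definition smallest_max_ordered :: "'a set \<Rightarrow> ('a \<Rightarrow> 'a \<Rightarrow> bool) \<Rightarrow> 'a set \<Rightarrow> bool" where
  "smallest_max_ordered X le A \<longleftrightarrow> max_ordered X le A \<and> height A le = height X le \<and>
     (\<forall>B. max_ordered X le B \<and> height B le = height X le \<longrightarrow> card A \<le> card B)"

definition is_aut :: "'a set \<Rightarrow> ('a \<Rightarrow> 'a \<Rightarrow> bool) \<Rightarrow> ('a \<Rightarrow> 'a) \<Rightarrow> bool" where
  "is_aut P le \<sigma> \<longleftrightarrow> iso_btw \<sigma> P le P le"

definition moved :: "'a set \<Rightarrow> ('a \<Rightarrow> 'a) \<Rightarrow> 'a set" where
  "moved P \<sigma> = {a \<in> P. \<sigma> a \<noteq> a}"

definition gen_family :: "'a set \<Rightarrow> ('a \<Rightarrow> 'a \<Rightarrow> bool) \<Rightarrow> 'q set \<Rightarrow> ('q \<Rightarrow> 'q \<Rightarrow> bool) \<Rightarrow> nat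
     \<Rightarrow> ('a \<Rightarrow> 'a) \<Rightarrow> (nat \<Rightarrow> 'a set) \<Rightarrow> bool" where
  "gen_family P le Q leQ r \<sigma> S \<longleftrightarrow> is_aut P le \<sigma> \<and>
     (\<forall>i<r. S i \<subseteq> moved P \<sigma> \<and> isomorphic (S i) le Q leQ \<and>
            smallest_max_ordered (moved P \<sigma>) le (S i) \<and>
            \<sigma> ` S i = S ((i + 1) mod r) \<and>
            height (S i) le = height (moved P \<sigma>) le) \<and>
     (\<Union>i<r. S i) = moved P \<sigma>"

definition is_generator :: "'a set \<Rightarrow> ('a \<Rightarrow> 'a \<Rightarrow> bool) \<Rightarrow> 'q set \<Rightarrow> ('q \<Rightarrow> 'q \<Rightarrow> bool) \<Rightarrow> nat
     \<Rightarrow> ('a \<Rightarrow> 'a) \<Rightarrow> bool" where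
  "is_generator P le Q leQ r \<sigma> \<longleftrightarrow> (\<exists>S. gen_family P le Q leQ r \<sigma> S)"

definition sym1 :: "'a set \<Rightarrow> ('a \<Rightarrow> 'a \<Rightarrow> bool) \<Rightarrow> 'q set \<Rightarrow> ('q \<Rightarrow> 'q \<Rightarrow> bool) \<Rightarrow> nat
     \<Rightarrow> 'a \<Rightarrow> 'a \<Rightarrow> bool" where
  "sym1 P le Q leQ r a b \<longleftrightarrow>
     (\<exists>\<sigma> S i j q. gen_family P le Q leQ r \<sigma> S \<and> i < r \<and> j < r \<and> S i \<noteq> S j \<and>
        a \<in> S i \<and> 1 \<le> q \<and> q < r \<and> b = (\<sigma> ^^ q) a \<and> b \<in> S j)"

text \<open>(Q,r)-symmetry: (Q,r,m)-symmetric for some m; this is the reflexive-transitive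
  closure of (Q,r,1)-symmetry.\<close>
definition symQr :: "'a set \<Rightarrow> ('a \<Rightarrow> 'a \<Rightarrow> bool) \<Rightarrow> 'q set \<Rightarrow> ('q \<Rightarrow> 'q \<Rightarrow> bool) \<Rightarrow> nat
     \<Rightarrow> 'a \<Rightarrow> 'a \<Rightarrow> bool" where
  "symQr P le Q leQ r = (sym1 P le Q leQ r)\<^sup>*\<^sup>*"

definition quot_carrier :: "'a set \<Rightarrow> ('a \<Rightarrow> 'a \<Rightarrow> bool) \<Rightarrow> 'q set \<Rightarrow> ('q \<Rightarrow> 'q \<Rightarrow> bool) \<Rightarrow> nat
     \<Rightarrow> 'a set set" where
  "quot_carrier P le Q leQ r = (\<lambda>a. {b \<in> P. symQr P le Q leQ r a b}) ` P"

definition quot_le :: "('a \<Rightarrow> 'a \<Rightarrow> bool) \<Rightarrow> 'a set \<Rightarrow> 'a set \<Rightarrow> bool" where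
  "quot_le le E F \<longleftrightarrow> (\<exists>e\<in>E. \<exists>f\<in>F. le e f)"

definition locally_symmetric :: "'a set \<Rightarrow> ('a \<Rightarrow> 'a \<Rightarrow> bool) \<Rightarrow> bool" where
  "locally_symmetric P le \<longleftrightarrow>
     (\<exists>(Q :: nat set) leQ r. finite Q \<and> is_poset Q leQ \<and> 2 \<le> r \<and>
        \<not> isomorphic (quot_carrier P le Q leQ r) (quot_le le) P le)"

definition locally_unsymmetric :: "'a set \<Rightarrow> ('a \<Rightarrow> 'a \<Rightarrow> bool) \<Rightarrow> bool" where
  "locally_unsymmetric P le \<longleftrightarrow> \<not> locally_symmetric P le"

definition posets_nl :: "nat \<Rightarrow> nat \<Rightarrow> (nat \<Rightarrow> nat \<Rightarrow> bool) set" where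
  "posets_nl n l = {le. is_poset {0..<n} le \<and> height {0..<n} le = l}"

definition iso_rel :: "nat \<Rightarrow> ((nat \<Rightarrow> nat \<Rightarrow> bool) \<times> (nat \<Rightarrow> nat \<Rightarrow> bool)) set" where
  "iso_rel n = {(l1, l2). isomorphic {0..<n} l1 {0..<n} l2}"

definition p_count :: "nat \<Rightarrow> nat \<Rightarrow> nat" where
  "p_count n l = card (posets_nl n l // iso_rel n)"

definition u_count :: "nat \<Rightarrow> nat \<Rightarrow> nat" where
  "u_count n l = card ({le \<in> posets_nl n l. locally_unsymmetric {0..<n} le} // iso_rel n)"

end

theory Submission
  imports Defs "HOL-Combinatorics.Transposition"
begin

text \<open>A poset with n elements and height n - 1 is a longest chain C together with one more
  point x. The elements of C below x form an initial segment of some length i, those above x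
  the final segment after position j, and i \<le> j because x is incomparable to some element
  of C. Hence the isomorphism classes correspond to the pairs i \<le> j < n - 1, of which there
  are n(n - 1)/2; the pair is recovered from the number of elements comparable to all others
  and the number of those among them lying below an element that is not.

  If i = j, then x and the i-th element of C are twins: swapping them is a generator with
  the one-point poset as Q and r = 2, so the quotient identifies them and is smaller than P.
  If i < j, then x is the only element incomparable to two others, and each element of C is
  determined by its number of predecessors in C; so P is rigid, every quotient is the
  discrete one, and P is locally unsymmetric. This leaves the (n - 1)(n - 2)/2 pairs i < j.\<close>

section \<open>Isomorphisms\<close>

lemma iso_btwD:
  assumes "iso_btw f A la B lb"
  shows "inj_on f A" "f ` A = B" "\<And>x y. x \<in> A \<Longrightarrow> y \<in> A \<Longrightarrow> la x y \<longleftrightarrow> lb (f x) (f y)"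
  using assms unfolding iso_btw_def bij_betw_def by auto

lemma iso_btw_inv_into:
  assumes "iso_btw f A la B lb"
  shows "iso_btw (inv_into A f) B lb A la"
  unfolding iso_btw_def
proof (intro conjI ballI)
  note f = iso_btwD[OF assms]
  show bij: "bij_betw (inv_into A f) B A"
    using assms unfolding iso_btw_def by (blast intro: bij_betw_inv_into)
  fix x y assume "x \<in> B" "y \<in> B"
  then show "lb x y \<longleftrightarrow> la (inv_into A f x) (inv_into A f y)"
    using f(3)[of "inv_into A f x" "inv_into A f y"] f(2) bij bij_betwE
    by (metis f_inv_into_f)
qed

lemma iso_btw_comp:
  "iso_btw f A la B lb \<Longrightarrow> iso_btw g B lb C lc \<Longrightarrow> iso_btw (g \<circ> f) A la C lc"
  unfolding iso_btw_def by (auto intro: bij_betw_trans dest: bij_betwE)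

lemma isomorphic_refl: "isomorphic A l A l"
  unfolding isomorphic_def iso_btw_def by (auto intro: exI[of _ id])

lemma isomorphic_sym: "isomorphic A la B lb \<Longrightarrow> isomorphic B lb A la"
  unfolding isomorphic_def using iso_btw_inv_into by blast

lemma isomorphic_trans:
  "isomorphic A la B lb \<Longrightarrow> isomorphic B lb C lc \<Longrightarrow> isomorphic A la C lc"
  unfolding isomorphic_def using iso_btw_comp by blast

lemma equiv_iso_rel: "equiv UNIV (iso_rel n)"
  unfolding iso_rel_def equiv_def refl_on_def sym_def trans_def
  using isomorphic_refl isomorphic_sym isomorphic_trans by blast

lemma iso_btw_card_Collect:
  assumes "iso_btw f A la B lb" "\<And>a. a \<in> A \<Longrightarrow> P a \<longleftrightarrow> Q (f a)"
  shows "card {a \<in> A. P a} = card {b \<in> B. Q b}"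
proof -
  note f = iso_btwD[OF assms(1)]
  have "f ` {a \<in> A. P a} = {b \<in> B. Q b}"
    using f(2) assms(2) by auto
  moreover have "inj_on f {a \<in> A. P a}"
    using f(1) by (rule inj_on_subset) auto
  ultimately show ?thesis
    by (metis card_image)
qed

lemma card_quotient_eq_card_index:
  assumes "equiv UNIV r" "f ` I \<subseteq> S"
    and "\<And>s. s \<in> S \<Longrightarrow> \<exists>i\<in>I. (s, f i) \<in> r"
    and "\<And>i k. i \<in> I \<Longrightarrow> k \<in> I \<Longrightarrow> (f i, f k) \<in> r \<Longrightarrow> i = k"
  shows "card (S // r) = card I"
proof -
  have classes: "S // r = (\<lambda>i. r `` {f i}) ` I"
  proof
    show "S // r \<subseteq> (\<lambda>i. r `` {f i}) ` I"
      using assms(1,3) by (force simp: quotient_def eq_equiv_class_iff)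
    show "(\<lambda>i. r `` {f i}) ` I \<subseteq> S // r"
      using assms(2) by (auto simp: quotient_def)
  qed
  have "inj_on (\<lambda>i. r `` {f i}) I"
    using assms(1,4) by (auto intro!: inj_onI simp: eq_equiv_class_iff)
  then show ?thesis
    unfolding classes by (rule card_image)
qed

section \<open>Height\<close>

lemma finite_chain_cards:
  assumes "finite A"
  shows "finite {card C | C. C \<subseteq> A \<and> is_chain C le}"
proof -
  have "{card C | C. C \<subseteq> A \<and> is_chain C le} \<subseteq> {..card A}"
    using assms by (auto intro: card_mono)
  then show ?thesis
    using finite_subset by blast
qed

lemma chain_card_le_height:
  assumes "finite A" "C \<subseteq> A" "is_chain C le"
  shows "card C \<le> height A le"
  unfolding height_def using assms finite_chain_cards[OF assms(1)] by (auto intro: Max_ge)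

lemma longest_chain_exists:
  assumes "finite A"
  obtains C where "C \<subseteq> A" "is_chain C le" "card C = height A le"
proof -
  have "{} \<subseteq> A \<and> is_chain {} le"
    by (simp add: is_chain_def)
  then have "{card C | C. C \<subseteq> A \<and> is_chain C le} \<noteq> {}"
    by blast
  from Max_in[OF finite_chain_cards[OF assms] this] that show ?thesis
    unfolding height_def by auto
qed

lemma height_leI:
  assumes "finite A" "\<And>C. C \<subseteq> A \<Longrightarrow> is_chain C le \<Longrightarrow> card C \<le> k"
  shows "height A le \<le> k"
  using longest_chain_exists[OF assms(1), of le] assms(2) by metis

lemma height_empty: "height {} le = 0"
  using height_leI[of "{}" le 0] by auto

lemma height_pos:
  assumes "finite A" "a \<in> A" "le a a"
  shows "1 \<le> height A le"
  using chain_card_le_height[of A "{a}" le] assms by (simp add: is_chain_def)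

lemma height_singleton:
  assumes "le a a"
  shows "height {a} le = 1"
proof (rule antisym)
  show "height {a} le \<le> 1"
    by (rule height_leI) (auto dest: card_mono[rotated])
  show "1 \<le> height {a} le"
    using height_pos[of "{a}" a le] assms by simp
qed

lemma height_antichain_pair:
  assumes "le a a" "\<not> le a b" "\<not> le b a"
  shows "height {a, b} le = 1"
proof (rule antisym)
  show "height {a, b} le \<le> 1"
  proof (rule height_leI)
    fix C assume "C \<subseteq> {a, b}" "is_chain C le"
    then have "C \<noteq> {a, b}"
      using assms by (auto simp: is_chain_def)
    with \<open>C \<subseteq> {a, b}\<close> have "C \<subseteq> {a} \<or> C \<subseteq> {b}"
      by blast
    then show "card C \<le> 1"
      by (auto dest: card_mono[rotated])
  qed simp
  show "1 \<le> height {a, b} le"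
    using height_pos[of "{a, b}" a le] assms by simp
qed

section \<open>Local symmetry\<close>

lemma not_isomorphic_quot_if_symQr:
  assumes "finite P" "a \<in> P" "b \<in> P" "a \<noteq> b"
    and "symQr P le Q leQ r a b" "symQr P le Q leQ r b a"
  shows "\<not> isomorphic (quot_carrier P le Q leQ r) (quot_le le) P le"
proof
  define cls where "cls x = {y \<in> P. symQr P le Q leQ r x y}" for x
  have "cls a = cls b"
    using assms(5,6) unfolding cls_def symQr_def by (auto intro: rtranclp_trans)
  then have "\<not> inj_on cls P"
    using assms(2-4) by (auto dest: inj_onD)
  assume "isomorphic (quot_carrier P le Q leQ r) (quot_le le) P le"
  then have "card (cls ` P) = card P"
    unfolding isomorphic_def iso_btw_def quot_carrier_def cls_def
    by (auto dest: bij_betw_same_card)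
  with \<open>\<not> inj_on cls P\<close> show False
    using assms(1) by (simp add: eq_card_imp_inj_on)
qed

lemma ord_pairs_singleton: "ord_pairs {c} le = 0"
proof -
  have no_pairs: "{(a, b). a \<in> {c} \<and> b \<in> {c} \<and> le a b \<and> a \<noteq> b} = {}"
    by auto
  show ?thesis
    unfolding ord_pairs_def no_pairs by simp
qed

definition twins :: "'a set \<Rightarrow> ('a \<Rightarrow> 'a \<Rightarrow> bool) \<Rightarrow> 'a \<Rightarrow> 'a \<Rightarrow> bool" where
  "twins P le a b \<longleftrightarrow> a \<in> P \<and> b \<in> P \<and> a \<noteq> b \<and> \<not> le a b \<and> \<not> le b a \<and>
     (\<forall>c\<in>P. c \<noteq> a \<longrightarrow> c \<noteq> b \<longrightarrow> (le a c \<longleftrightarrow> le b c) \<and> (le c a \<longleftrightarrow> le c b))"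

lemma twins_iso:
  assumes f: "iso_btw f A la B lb" and "twins A la a b"
  shows "twins B lb (f a) (f b)"
proof -
  note f = iso_btwD[OF f]
  have a: "a \<in> A" and b: "b \<in> A" and "a \<noteq> b"
    and others: "\<And>c. c \<in> A \<Longrightarrow> c \<noteq> a \<Longrightarrow> c \<noteq> b \<Longrightarrow> (la a c \<longleftrightarrow> la b c) \<and> (la c a \<longleftrightarrow> la c b)"
    using assms(2) unfolding twins_def by auto
  have "f a \<noteq> f b"
    using f(1) a b \<open>a \<noteq> b\<close> by (auto dest: inj_onD)
  moreover have "(lb (f a) (f c) \<longleftrightarrow> lb (f b) (f c)) \<and> (lb (f c) (f a) \<longleftrightarrow> lb (f c) (f b))"
    if "c \<in> A" "f c \<noteq> f a" "f c \<noteq> f b" for c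
    using that others[of c] f(3)[OF a that(1)] f(3)[OF b that(1)] f(3)[OF that(1) a] f(3)[OF that(1) b]
    by auto
  ultimately show ?thesis
    using assms(2) f(2) f(3)[OF a b] f(3)[OF b a] unfolding twins_def by auto
qed

lemma twins_is_aut:
  assumes "is_poset P le" "twins P le a b"
  shows "is_aut P le (transpose a b)"
  unfolding is_aut_def iso_btw_def
proof (intro conjI ballI)
  have a: "a \<in> P" and b: "b \<in> P" and "a \<noteq> b" "\<not> le a b" "\<not> le b a"
    and others: "\<And>c. c \<in> P \<Longrightarrow> c \<noteq> a \<Longrightarrow> c \<noteq> b \<Longrightarrow> (le a c \<longleftrightarrow> le b c) \<and> (le c a \<longleftrightarrow> le c b)"
    using assms(2) unfolding twins_def by auto
  have refl: "\<And>x. x \<in> P \<Longrightarrow> le x x"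
    using assms(1) unfolding is_poset_def by blast
  show "bij_betw (transpose a b) P P"
    using a b by simp
  fix x y assume x: "x \<in> P" and y: "y \<in> P"
  show "le x y \<longleftrightarrow> le (transpose a b x) (transpose a b y)"
    using others[OF x] others[OF y] refl[OF x] refl[OF a] refl[OF b]
      \<open>a \<noteq> b\<close> \<open>\<not> le a b\<close> \<open>\<not> le b a\<close>
    by (cases "x = a"; cases "x = b"; cases "y = a"; cases "y = b") simp_all
qed

lemma smallest_max_ordered_singleton:
  assumes "finite X" "c \<in> X" "le c c" "height X le = 1"
  shows "smallest_max_ordered X le {c}"
  unfolding smallest_max_ordered_def max_ordered_def
proof (intro conjI allI impI)
  fix B assume "B \<subseteq> X \<and> card B = card {c}"
  then obtain d where "B = {d}"
    by (auto simp: card_Suc_eq)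
  then show "ord_pairs B le \<le> ord_pairs {c} le"
    by (simp add: ord_pairs_singleton)
next
  fix B assume "(B \<subseteq> X \<and> (\<forall>B'. B' \<subseteq> X \<and> card B' = card B \<longrightarrow> ord_pairs B' le \<le> ord_pairs B le)) \<and>
    height B le = height X le"
  then have "B \<subseteq> X" "B \<noteq> {}"
    using assms(4) height_empty[of le] by auto
  then show "card {c} \<le> card B"
    using assms(1) by (simp add: Suc_leI card_gt_0_iff rev_finite_subset)
qed (use assms height_singleton[of le c] in auto)

lemma twins_gen_family:
  assumes "is_poset P le" "twins P le a b"
  shows "gen_family P le {0} (\<lambda>x y. x = 0 \<and> y = 0) 2 (transpose a b) (\<lambda>i. if i = 0 then {a} else {b})"
    (is "gen_family P le ?Q ?leQ 2 ?\<sigma> ?S")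
proof -
  have a: "a \<in> P" and b: "b \<in> P" and "a \<noteq> b" "\<not> le a b" "\<not> le b a"
    using assms(2) unfolding twins_def by auto
  have refl: "le a a" "le b b"
    using assms(1) a b unfolding is_poset_def by blast+
  have moved: "moved P ?\<sigma> = {a, b}"
    unfolding moved_def using a b \<open>a \<noteq> b\<close> by (auto simp: transpose_def)
  have height_moved: "height (moved P ?\<sigma>) le = 1"
    unfolding moved by (rule height_antichain_pair) fact+
  have "smallest_max_ordered (moved P ?\<sigma>) le (?S i)" for i
    using smallest_max_ordered_singleton[of "{a, b}" a le] smallest_max_ordered_singleton[of "{a, b}" b le]
      refl height_moved unfolding moved by simp
  moreover have "height (?S i) le = 1" for i
    using height_singleton[of le] refl by simp
  moreover have "isomorphic (?S i) le ?Q ?leQ" for i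
    unfolding isomorphic_def iso_btw_def
    using refl by (intro exI[of _ "\<lambda>_. 0"]) (simp add: bij_betw_def)
  moreover have "?\<sigma> ` ?S i = ?S ((i + 1) mod 2)" if "i < 2" for i
    using that by (auto simp: less_2_cases_iff)
  moreover have "(\<Union>i<2. ?S i) = moved P ?\<sigma>"
    unfolding moved by (auto simp: lessThan_nat_numeral)
  ultimately show ?thesis
    unfolding gen_family_def using twins_is_aut[OF assms] moved height_moved by auto
qed

lemma twins_locally_symmetric:
  assumes "is_poset P le" "finite P" "twins P le a b"
  shows "locally_symmetric P le"
proof -
  let ?Q = "{0 :: nat}" and ?leQ = "\<lambda>x y :: nat. x = 0 \<and> y = 0"
  have a: "a \<in> P" and b: "b \<in> P" and "a \<noteq> b"
    using assms(3) unfolding twins_def by auto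
  note family = twins_gen_family[OF assms(1,3)]
  have "sym1 P le ?Q ?leQ 2 a b"
    unfolding sym1_def using family \<open>a \<noteq> b\<close>
    by (intro exI[of _ "transpose a b"] exI[of _ "\<lambda>i. if i = 0 then {a} else {b}"]
        exI[of _ 0] exI[of _ 1] exI[of _ 1]) simp
  moreover have "sym1 P le ?Q ?leQ 2 b a"
    unfolding sym1_def using family \<open>a \<noteq> b\<close>
    by (intro exI[of _ "transpose a b"] exI[of _ "\<lambda>i. if i = 0 then {a} else {b}"]
        exI[of _ 1] exI[of _ 0] exI[of _ 1]) simp
  ultimately have "\<not> isomorphic (quot_carrier P le ?Q ?leQ 2) (quot_le le) P le"
    using not_isomorphic_quot_if_symQr[OF assms(2) a b \<open>a \<noteq> b\<close>]
    unfolding symQr_def by blast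
  moreover have "is_poset ?Q ?leQ"
    unfolding is_poset_def by auto
  ultimately show ?thesis
    unfolding locally_symmetric_def by blast
qed

lemma rigid_locally_unsymmetric:
  assumes rigid: "\<And>\<sigma> x. is_aut P le \<sigma> \<Longrightarrow> x \<in> P \<Longrightarrow> \<sigma> x = x"
  shows "locally_unsymmetric P le"
proof -
  have "isomorphic (quot_carrier P le Q leQ r) (quot_le le) P le"
    for Q :: "nat set" and leQ r
  proof -
    have no_sym1: "\<not> sym1 P le Q leQ r x y" for x y
    proof
      assume "sym1 P le Q leQ r x y"
      then obtain \<sigma> S i j where family: "gen_family P le Q leQ r \<sigma> S"
        and "i < r" "j < r" "S i \<noteq> S j"
        unfolding sym1_def by blast
      then have "moved P \<sigma> = {}"
        using rigid unfolding gen_family_def moved_def by auto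
      with family \<open>i < r\<close> \<open>j < r\<close> \<open>S i \<noteq> S j\<close> show False
        unfolding gen_family_def by auto
    qed
    have "symQr P le Q leQ r x y \<longleftrightarrow> x = y" for x y
      unfolding symQr_def using no_sym1 by (metis converse_rtranclpE rtranclp.rtrancl_refl)
    then have classes: "quot_carrier P le Q leQ r = (\<lambda>x. {x}) ` P"
      unfolding quot_carrier_def by auto
    have "iso_btw the_elem ((\<lambda>x. {x}) ` P) (quot_le le) P le"
      unfolding iso_btw_def quot_le_def
      by (auto intro!: bij_betw_imageI simp: inj_on_def image_image)
    then show ?thesis
      unfolding classes isomorphic_def by blast
  qed
  then show ?thesis
    unfolding locally_unsymmetric_def locally_symmetric_def by blast
qed

section \<open>Chains\<close>

lemma finite_chain_rank:
  assumes "is_poset P le" "C \<subseteq> P" "finite C" "is_chain C le"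
  obtains rk where "bij_betw rk C {..<card C}"
    and "\<And>c c'. c \<in> C \<Longrightarrow> c' \<in> C \<Longrightarrow> le c c' \<longleftrightarrow> rk c \<le> rk c'"
proof -
  define rk where "rk c = card {d \<in> C. le d c \<and> d \<noteq> c}" for c
  have antisym: "\<And>a b. a \<in> C \<Longrightarrow> b \<in> C \<Longrightarrow> le a b \<Longrightarrow> le b a \<Longrightarrow> a = b"
    and trans: "\<And>a b c. a \<in> C \<Longrightarrow> b \<in> C \<Longrightarrow> c \<in> C \<Longrightarrow> le a b \<Longrightarrow> le b c \<Longrightarrow> le a c"
    using assms(1,2) unfolding is_poset_def by blast+
  have total: "\<And>a b. a \<in> C \<Longrightarrow> b \<in> C \<Longrightarrow> le a b \<or> le b a"
    using assms(4) unfolding is_chain_def by blast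
  have strict: "rk c < rk c'" if "c \<in> C" "c' \<in> C" "le c c'" "c \<noteq> c'" for c c'
  proof -
    have "insert c {d \<in> C. le d c \<and> d \<noteq> c} \<subseteq> {d \<in> C. le d c' \<and> d \<noteq> c'}"
      using that trans antisym by blast
    from card_mono[OF _ this] show ?thesis
      using assms(3) by (simp add: rk_def)
  qed
  have rk_le: "le c c' \<longleftrightarrow> rk c \<le> rk c'" if "c \<in> C" "c' \<in> C" for c c'
  proof
    show "le c c' \<Longrightarrow> rk c \<le> rk c'"
      using strict[OF that] by (cases "c = c'") auto
    assume "rk c \<le> rk c'"
    show "le c c'"
    proof (rule ccontr)
      assume "\<not> le c c'"
      with total[OF that] total[OF that(1,1)] have "le c' c" "c' \<noteq> c"
        by auto
      with strict[OF that(2,1)] \<open>rk c \<le> rk c'\<close> show False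
        by simp
    qed
  qed
  have inj: "inj_on rk C"
  proof (rule inj_onI)
    fix c c' assume "c \<in> C" "c' \<in> C" "rk c = rk c'"
    then show "c = c'"
      using rk_le[of c c'] rk_le[of c' c] antisym by simp
  qed
  have "rk c < card C" if "c \<in> C" for c
  proof -
    have "rk c \<le> card (C - {c})"
      unfolding rk_def by (rule card_mono) (use assms(3) in auto)
    then show ?thesis
      using card_Diff1_less[OF assms(3) that] by linarith
  qed
  then have "rk ` C = {..<card C}"
    by (intro card_subset_eq) (auto simp: card_image[OF inj])
  with inj have "bij_betw rk C {..<card C}"
    by (rule bij_betw_imageI)
  with rk_le that show ?thesis
    by blast
qed

lemma down_closed_eq_lessThan:
  fixes D :: "nat set"
  assumes "finite D" "\<And>k k'. k' \<in> D \<Longrightarrow> k \<le> k' \<Longrightarrow> k \<in> D"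
  shows "D = {..<card D}"
proof (cases "D = {}")
  case False
  then have "D = {..Max D}"
    using assms by (auto intro: Max_ge Max_in)
  then show ?thesis
    by (metis card_atMost lessThan_Suc_atMost)
qed simp

lemma up_closed_eq_atLeastLessThan:
  fixes U :: "nat set"
  assumes "U \<subseteq> {..<m}" "\<And>k k'. k' \<in> U \<Longrightarrow> k' \<le> k \<Longrightarrow> k < m \<Longrightarrow> k \<in> U"
  shows "U = {m - card U..<m}"
proof -
  have "{..<m} - U = {..<card ({..<m} - U)}"
    by (rule down_closed_eq_lessThan) (use assms(2) in force)+
  moreover have "card ({..<m} - U) = m - card U"
    using assms(1) by (simp add: card_Diff_subset finite_subset)
  ultimately have "{..<m} - U = {..<m - card U}"
    by simp
  moreover have "U = {..<m} - ({..<m} - U)"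
    using assms(1) by blast
  ultimately show ?thesis
    by auto
qed

lemma chain_segments:
  assumes "is_poset P le" "C \<subseteq> P" "x \<in> P" "bij_betw rk C {..<m}"
    and rk_le: "\<And>c c'. c \<in> C \<Longrightarrow> c' \<in> C \<Longrightarrow> le c c' \<longleftrightarrow> rk c \<le> rk c'"
    and "c \<in> C"
  shows "le c x \<longleftrightarrow> rk c < card {d \<in> C. le d x}"
    and "le x c \<longleftrightarrow> m - card {d \<in> C. le x d} \<le> rk c"
proof -
  have trans: "\<And>a b c. a \<in> P \<Longrightarrow> b \<in> P \<Longrightarrow> c \<in> P \<Longrightarrow> le a b \<Longrightarrow> le b c \<Longrightarrow> le a c"
    using assms(1) unfolding is_poset_def by blast
  have inj: "inj_on rk C" and img: "rk ` C = {..<m}"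
    using assms(4) by (auto simp: bij_betw_def)
  have rk_mem: "rk c \<in> rk ` {d \<in> C. Q d} \<longleftrightarrow> Q c" for Q
    using inj assms(6) by (auto dest: inj_onD)
  have card_rk: "card (rk ` {d \<in> C. Q d}) = card {d \<in> C. Q d}" for Q
    using inj by (auto intro: card_image inj_on_subset)
  have preimage: "\<exists>d\<in>C. rk d = k" if "k < m" for k
    using img that by (metis image_iff lessThan_iff)
  have "rk ` {d \<in> C. le d x} = {..<card (rk ` {d \<in> C. le d x})}"
  proof (rule down_closed_eq_lessThan)
    fix k k' assume "k' \<in> rk ` {d \<in> C. le d x}" "k \<le> k'"
    then obtain d' where d': "d' \<in> C" "le d' x" "k \<le> rk d'"
      by blast
    moreover have "rk d' < m"
      using img d'(1) by blast
    ultimately obtain d where d: "d \<in> C" "rk d = k"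
      using preimage by (meson le_less_trans)
    then have "le d d'"
      using rk_le d' by simp
    with d d' show "k \<in> rk ` {d \<in> C. le d x}"
      using trans assms(2,3) by blast
  qed (use assms(4) in \<open>simp add: bij_betw_finite\<close>)
  then show "le c x \<longleftrightarrow> rk c < card {d \<in> C. le d x}"
    using rk_mem[of "\<lambda>d. le d x"] by (simp add: card_rk)
  have "rk ` {d \<in> C. le x d} = {m - card (rk ` {d \<in> C. le x d})..<m}"
  proof (rule up_closed_eq_atLeastLessThan)
    fix k k' assume "k' \<in> rk ` {d \<in> C. le x d}" "k' \<le> k" "k < m"
    then obtain d' d where "d' \<in> C" "le x d'" "rk d' \<le> k" "d \<in> C" "rk d = k"
      using preimage by blast
    then show "k \<in> rk ` {d \<in> C. le x d}"
      using rk_le trans assms(2,3) by blast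
  qed (use img in auto)
  then show "le x c \<longleftrightarrow> m - card {d \<in> C. le x d} \<le> rk c"
    using rk_mem[of "\<lambda>d. le x d"] img assms(6) by (auto simp: card_rk)
qed

section \<open>Posets of height one less than their size\<close>

text \<open>The chain \<open>0 < 1 < \<dots> < n - 2\<close> together with the point \<open>n - 1\<close>, which lies above exactly
  \<open>0, \<dots>, i - 1\<close> and below exactly \<open>j + 1, \<dots>, n - 2\<close>.\<close>

definition chain_with_point :: "nat \<Rightarrow> nat \<Rightarrow> nat \<Rightarrow> nat \<Rightarrow> nat \<Rightarrow> bool" where
  "chain_with_point n i j a b \<longleftrightarrow> a < n \<and> b < n \<and>
     ((a < n - 1 \<and> b < n - 1 \<and> a \<le> b) \<or> (a = n - 1 \<and> b = n - 1) \<or>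
      (a < n - 1 \<and> b = n - 1 \<and> a < i) \<or> (a = n - 1 \<and> b < n - 1 \<and> j < b))"

lemma chain_with_point_is_poset:
  "i \<le> j \<Longrightarrow> is_poset {0..<n} (chain_with_point n i j)"
  unfolding is_poset_def chain_with_point_def by auto

lemma height_chain_with_point:
  assumes "i \<le> j" "j < n - 1"
  shows "height {0..<n} (chain_with_point n i j) = n - 1"
proof (rule antisym)
  show "height {0..<n} (chain_with_point n i j) \<le> n - 1"
  proof (rule height_leI)
    fix C assume C: "C \<subseteq> {0..<n}" "is_chain C (chain_with_point n i j)"
    have "\<not> chain_with_point n i j i (n - 1)" "\<not> chain_with_point n i j (n - 1) i"
      using assms unfolding chain_with_point_def by auto
    then have "C \<noteq> {0..<n}"
      using C(2) assms unfolding is_chain_def by force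
    with C(1) have "card C < card {0..<n}"
      by (meson finite_atLeastLessThan psubsetI psubset_card_mono)
    then show "card C \<le> n - 1"
      by simp
  qed simp
  have "is_chain {0..<n - 1} (chain_with_point n i j)"
    unfolding is_chain_def chain_with_point_def by auto
  then show "n - 1 \<le> height {0..<n} (chain_with_point n i j)"
    using chain_card_le_height[of "{0..<n}" "{0..<n - 1}"] by auto
qed

lemma iso_btw_chain_with_point:
  assumes rk: "bij_betw rk C {..<n - 1}"
    and rk_le: "\<And>c c'. c \<in> C \<Longrightarrow> c' \<in> C \<Longrightarrow> le c c' \<longleftrightarrow> rk c \<le> rk c'"
    and below: "\<And>c. c \<in> C \<Longrightarrow> le c x \<longleftrightarrow> rk c < i"
    and above: "\<And>c. c \<in> C \<Longrightarrow> le x c \<longleftrightarrow> j < rk c"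
    and "x \<notin> C" "le x x" "0 < n"
  shows "iso_btw (rk(x := n - 1)) (insert x C) le {0..<n} (chain_with_point n i j)"
  unfolding iso_btw_def
proof (intro conjI ballI)
  have img: "rk ` C = {..<n - 1}" and inj: "inj_on rk C"
    using rk by (auto simp: bij_betw_def)
  have "inj_on (rk(x := n - 1)) C"
    using inj \<open>x \<notin> C\<close> by (simp add: inj_on_def)
  moreover have "(rk(x := n - 1)) ` C = {..<n - 1}"
    using img \<open>x \<notin> C\<close> by (simp only: fun_upd_image if_False)
  ultimately show "bij_betw (rk(x := n - 1)) (insert x C) {0..<n}"
    using \<open>x \<notin> C\<close> \<open>0 < n\<close> by (auto simp: bij_betw_def inj_on_insert)
  have rk_less: "rk c < n - 1" if "c \<in> C" for c
    using img that by blast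
  fix a b assume "a \<in> insert x C" "b \<in> insert x C"
  then show "le a b \<longleftrightarrow> chain_with_point n i j ((rk(x := n - 1)) a) ((rk(x := n - 1)) b)"
    using rk_less[of a] rk_less[of b] \<open>x \<notin> C\<close> \<open>le x x\<close> \<open>0 < n\<close>
    by (cases "a = x"; cases "b = x") (auto simp: chain_with_point_def rk_le below above)
qed

lemma card_below_above_less:
  assumes "is_poset P le" "finite P" "C \<subseteq> P" "is_chain C le" "x \<in> P - C" "height P le = card C"
  shows "card {c \<in> C. le c x} + card {c \<in> C. le x c} < card C"
proof -
  have refl: "le x x" and antisym: "\<And>c. c \<in> C \<Longrightarrow> le c x \<Longrightarrow> le x c \<Longrightarrow> c = x"
    using assms(1,3,5) unfolding is_poset_def by blast+
  have "finite C"
    using assms(3,2) by (rule finite_subset)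
  have "\<not> is_chain (insert x C) le"
    using chain_card_le_height[OF assms(2), of "insert x C" le] assms(3,5,6) \<open>finite C\<close> by auto
  then have "{c \<in> C. le c x} \<union> {c \<in> C. le x c} \<subset> C"
    using assms(4) refl unfolding is_chain_def by blast
  moreover have "{c \<in> C. le c x} \<inter> {c \<in> C. le x c} = {}"
    using antisym assms(5) by blast
  ultimately show ?thesis
    using psubset_card_mono[OF \<open>finite C\<close>] \<open>finite C\<close> by (simp add: card_Un_disjoint[symmetric])
qed

lemma isomorphic_chain_with_point:
  assumes "is_poset P le" "finite P" "card P = n" "height P le = n - 1" "0 < n"
  obtains i j where "i \<le> j" "j < n - 1" "isomorphic P le {0..<n} (chain_with_point n i j)"
proof -
  obtain C where C: "C \<subseteq> P" "is_chain C le" "card C = n - 1"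
    using longest_chain_exists[OF assms(2), of le] assms(4) by metis
  have "finite C"
    using C(1) assms(2) by (rule finite_subset)
  then have "card (P - C) = 1"
    using C assms(3,5) by (simp add: card_Diff_subset)
  then obtain x where "P - C = {x}"
    by (rule card_1_singletonE)
  then have x: "x \<in> P" "x \<notin> C" and P: "P = insert x C"
    using C(1) by auto
  obtain rk where rk: "bij_betw rk C {..<n - 1}"
    and rk_le: "\<And>c c'. c \<in> C \<Longrightarrow> c' \<in> C \<Longrightarrow> le c c' \<longleftrightarrow> rk c \<le> rk c'"
    using finite_chain_rank[OF assms(1) C(1) \<open>finite C\<close> C(2)] C(3) by metis
  have refl: "le x x"
    using assms(1) x(1) unfolding is_poset_def by blast
  have segments_short: "card {c \<in> C. le c x} + card {c \<in> C. le x c} < n - 1"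
    using card_below_above_less[OF assms(1,2) C(1,2)] x assms(4) C(3) by simp
  define i j where "i = card {c \<in> C. le c x}" and "j = n - 2 - card {c \<in> C. le x c}"
  have "iso_btw (rk(x := n - 1)) P le {0..<n} (chain_with_point n i j)"
    unfolding P
  proof (rule iso_btw_chain_with_point[OF rk rk_le])
    fix c assume "c \<in> C"
    note segments = chain_segments[OF assms(1) C(1) x(1) rk rk_le \<open>c \<in> C\<close>]
    show "le c x \<longleftrightarrow> rk c < i"
      using segments(1) unfolding i_def .
    show "le x c \<longleftrightarrow> j < rk c"
      using segments(2) segments_short unfolding j_def by linarith
  qed (use x refl assms(5) in auto)
  moreover have "i \<le> j" "j < n - 1"
    using segments_short unfolding i_def j_def by linarith+
  ultimately show thesis
    using that unfolding isomorphic_def by blast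
qed

definition comparable_to_all :: "'a set \<Rightarrow> ('a \<Rightarrow> 'a \<Rightarrow> bool) \<Rightarrow> 'a \<Rightarrow> bool" where
  "comparable_to_all P le a \<longleftrightarrow> (\<forall>b\<in>P. le a b \<or> le b a)"

definition below_incomparable :: "'a set \<Rightarrow> ('a \<Rightarrow> 'a \<Rightarrow> bool) \<Rightarrow> 'a \<Rightarrow> bool" where
  "below_incomparable P le a \<longleftrightarrow> (\<exists>c\<in>P. \<not> comparable_to_all P le c \<and> le a c)"

lemma comparable_to_all_iso:
  assumes "iso_btw f A la B lb" "a \<in> A"
  shows "comparable_to_all B lb (f a) \<longleftrightarrow> comparable_to_all A la a"
  using iso_btwD[OF assms(1)] assms(2) unfolding comparable_to_all_def by auto

lemma below_incomparable_iso:
  assumes f: "iso_btw f A la B lb" and "a \<in> A"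
  shows "below_incomparable B lb (f a) \<longleftrightarrow> below_incomparable A la a"
proof -
  note f' = iso_btwD[OF f]
  have "below_incomparable B lb (f a) \<longleftrightarrow> (\<exists>c\<in>A. \<not> comparable_to_all B lb (f c) \<and> lb (f a) (f c))"
    unfolding below_incomparable_def f'(2)[symmetric] by blast
  also have "\<dots> \<longleftrightarrow> below_incomparable A la a"
    unfolding below_incomparable_def using comparable_to_all_iso[OF f] f'(3)[OF \<open>a \<in> A\<close>]
    by (intro bex_cong) simp_all
  finally show ?thesis .
qed

lemma comparable_to_all_chain_with_point:
  assumes "i \<le> j" "j < n - 1" "a < n"
  shows "comparable_to_all {0..<n} (chain_with_point n i j) a \<longleftrightarrow> a < i \<or> j < a \<and> a < n - 1"
proof
  assume "comparable_to_all {0..<n} (chain_with_point n i j) a"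
  then have "chain_with_point n i j a b \<or> chain_with_point n i j b a" if "b < n" for b
    using that unfolding comparable_to_all_def by simp
  from this[of i] this[of "n - 1"] assms show "a < i \<or> j < a \<and> a < n - 1"
    unfolding chain_with_point_def by (cases "a = n - 1") auto
next
  assume a: "a < i \<or> j < a \<and> a < n - 1"
  have "chain_with_point n i j a b \<or> chain_with_point n i j b a" if "b < n" for b
    using a assms that unfolding chain_with_point_def by (cases "b = n - 1") auto
  then show "comparable_to_all {0..<n} (chain_with_point n i j) a"
    unfolding comparable_to_all_def by simp
qed

lemma card_comparable_to_all_chain_with_point:
  assumes "i \<le> j" "j < n - 1"
  shows "card {a \<in> {0..<n}. comparable_to_all {0..<n} (chain_with_point n i j) a} = i + (n - 2 - j)"
proof -
  have "{a \<in> {0..<n}. comparable_to_all {0..<n} (chain_with_point n i j) a} = {..<i} \<union> {j<..<n - 1}"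
    using comparable_to_all_chain_with_point[OF assms] assms by auto
  moreover have "card ({..<i} \<union> {j<..<n - 1}) = i + (n - 2 - j)"
    using assms(1) by (subst card_Un_disjoint) auto
  ultimately show ?thesis
    by simp
qed

lemma card_comparable_to_all_below_incomparable_chain_with_point:
  assumes "i \<le> j" "j < n - 1"
  defines "le \<equiv> chain_with_point n i j"
  shows "card {a \<in> {0..<n}. comparable_to_all {0..<n} le a \<and> below_incomparable {0..<n} le a} = i"
proof -
  have comparable: "comparable_to_all {0..<n} le a \<longleftrightarrow> a < i \<or> j < a \<and> a < n - 1"
    if "a \<in> {0..<n}" for a
    using comparable_to_all_chain_with_point[OF assms(1,2)] that unfolding le_def by simp
  have "comparable_to_all {0..<n} le a \<and> below_incomparable {0..<n} le a \<longleftrightarrow> a < i"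
    if "a \<in> {0..<n}" for a
  proof
    assume "a < i"
    moreover have "\<not> comparable_to_all {0..<n} le (n - 1)" "n - 1 \<in> {0..<n}"
      using comparable[of "n - 1"] assms(1,2) by auto
    ultimately show "comparable_to_all {0..<n} le a \<and> below_incomparable {0..<n} le a"
      using comparable[OF that] assms(1,2) unfolding below_incomparable_def le_def chain_with_point_def
      by auto
  next
    assume "comparable_to_all {0..<n} le a \<and> below_incomparable {0..<n} le a"
    then obtain c where "comparable_to_all {0..<n} le a" "c \<in> {0..<n}"
      "\<not> comparable_to_all {0..<n} le c" "le a c"
      unfolding below_incomparable_def by blast
    then show "a < i"
      using comparable[OF that] comparable[of c] unfolding le_def chain_with_point_def by auto
  qed
  moreover have "{..<i} \<subseteq> {0..<n}"
    using assms(1,2) by auto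
  ultimately have "{a \<in> {0..<n}. comparable_to_all {0..<n} le a \<and> below_incomparable {0..<n} le a} = {..<i}"
    by blast
  then show ?thesis
    by simp
qed

lemma isomorphic_chain_with_point_iff:
  assumes "i \<le> j" "j < n - 1" "i' \<le> j'" "j' < n - 1"
  shows "isomorphic {0..<n} (chain_with_point n i j) {0..<n} (chain_with_point n i' j') \<longleftrightarrow>
    i = i' \<and> j = j'"
proof
  assume "isomorphic {0..<n} (chain_with_point n i j) {0..<n} (chain_with_point n i' j')"
  then obtain f where f: "iso_btw f {0..<n} (chain_with_point n i j) {0..<n} (chain_with_point n i' j')"
    unfolding isomorphic_def by blast
  have "card {a \<in> {0..<n}. comparable_to_all {0..<n} (chain_with_point n i j) a} =
      card {a \<in> {0..<n}. comparable_to_all {0..<n} (chain_with_point n i' j') a}"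
    by (rule iso_btw_card_Collect[OF f]) (simp add: comparable_to_all_iso[OF f])
  moreover have "card {a \<in> {0..<n}. comparable_to_all {0..<n} (chain_with_point n i j) a \<and>
        below_incomparable {0..<n} (chain_with_point n i j) a} =
      card {a \<in> {0..<n}. comparable_to_all {0..<n} (chain_with_point n i' j') a \<and>
        below_incomparable {0..<n} (chain_with_point n i' j') a}"
    by (rule iso_btw_card_Collect[OF f]) (simp add: comparable_to_all_iso[OF f] below_incomparable_iso[OF f])
  ultimately show "i = i' \<and> j = j'"
    using assms card_comparable_to_all_chain_with_point[OF assms(1,2)]
      card_comparable_to_all_chain_with_point[OF assms(3,4)]
      card_comparable_to_all_below_incomparable_chain_with_point[OF assms(1,2)]
      card_comparable_to_all_below_incomparable_chain_with_point[OF assms(3,4)]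
    by simp
qed (simp add: isomorphic_refl)

lemma chain_with_point_aut_fixes_point:
  assumes "i < j" "j < n - 1" "is_aut {0..<n} (chain_with_point n i j) \<sigma>"
  shows "\<sigma> (n - 1) = n - 1"
proof (rule ccontr)
  let ?le = "chain_with_point n i j"
  have \<sigma>: "iso_btw \<sigma> {0..<n} ?le {0..<n} ?le"
    using assms(3) unfolding is_aut_def .
  define incomparable where "incomparable a = {b \<in> {0..<n}. \<not> ?le a b \<and> \<not> ?le b a}" for a
  assume "\<sigma> (n - 1) \<noteq> n - 1"
  moreover have "\<sigma> (n - 1) \<in> {0..<n}"
    using iso_btwD(2)[OF \<sigma>] assms(2) by auto
  ultimately have "incomparable (\<sigma> (n - 1)) \<subseteq> {n - 1}"
    using assms(1,2) unfolding incomparable_def chain_with_point_def by auto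
  then have "card (incomparable (\<sigma> (n - 1))) \<le> 1"
    by (auto dest: card_mono[rotated])
  moreover have "card (incomparable (n - 1)) = card (incomparable (\<sigma> (n - 1)))"
    unfolding incomparable_def using assms(2)
    by (intro iso_btw_card_Collect[OF \<sigma>]) (simp add: iso_btwD(3)[OF \<sigma>, symmetric])
  moreover have "incomparable (n - 1) = {i..j}"
    using assms(1,2) unfolding incomparable_def chain_with_point_def by auto
  ultimately show False
    using assms(1) by simp
qed

lemma chain_with_point_rigid:
  assumes "i < j" "j < n - 1" "is_aut {0..<n} (chain_with_point n i j) \<sigma>" "a \<in> {0..<n}"
  shows "\<sigma> a = a"
proof (cases "a = n - 1")
  case False
  let ?le = "chain_with_point n i j"
  have \<sigma>: "iso_btw \<sigma> {0..<n} ?le {0..<n} ?le"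
    using assms(3) unfolding is_aut_def .
  note \<sigma>' = iso_btwD[OF \<sigma>]
  have top: "\<sigma> (n - 1) = n - 1"
    using chain_with_point_aut_fixes_point[OF assms(1-3)] .
  have "\<sigma> a \<noteq> n - 1" "\<sigma> a \<in> {0..<n}"
    using False assms(2,4) top inj_onD[OF \<sigma>'(1), of a "n - 1"] \<sigma>'(2) by auto
  with False assms(4) have "a < n - 1" "\<sigma> a < n - 1"
    by auto
  moreover have "card {b \<in> {0..<n}. b \<noteq> n - 1 \<and> ?le b a \<and> b \<noteq> a} =
      card {b \<in> {0..<n}. b \<noteq> n - 1 \<and> ?le b (\<sigma> a) \<and> b \<noteq> \<sigma> a}"
  proof (rule iso_btw_card_Collect[OF \<sigma>])
    fix b assume "b \<in> {0..<n}"
    then show "b \<noteq> n - 1 \<and> ?le b a \<and> b \<noteq> a \<longleftrightarrow> \<sigma> b \<noteq> n - 1 \<and> ?le (\<sigma> b) (\<sigma> a) \<and> \<sigma> b \<noteq> \<sigma> a"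
      using assms(2,4) top inj_onD[OF \<sigma>'(1), of b a] inj_onD[OF \<sigma>'(1), of b "n - 1"]
      by (auto simp: \<sigma>'(3)[symmetric])
  qed
  moreover have "{b \<in> {0..<n}. b \<noteq> n - 1 \<and> ?le b c \<and> b \<noteq> c} = {..<c}" if "c < n - 1" for c
    using that unfolding chain_with_point_def by auto
  ultimately show ?thesis
    by simp
qed (use chain_with_point_aut_fixes_point[OF assms(1-3)] in simp)

lemma chain_with_point_twins:
  "i < n - 1 \<Longrightarrow> twins {0..<n} (chain_with_point n i i) i (n - 1)"
  unfolding twins_def chain_with_point_def by auto

lemma locally_symmetric_if_isomorphic_chain_with_point:
  assumes "is_poset P le" "finite P" "i < n - 1"
    and "isomorphic P le {0..<n} (chain_with_point n i i)"
  shows "locally_symmetric P le"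
proof -
  obtain f where "iso_btw f {0..<n} (chain_with_point n i i) P le"
    using isomorphic_sym[OF assms(4)] unfolding isomorphic_def by blast
  from twins_iso[OF this chain_with_point_twins[OF assms(3)]]
  show ?thesis
    by (rule twins_locally_symmetric[OF assms(1,2)])
qed

section \<open>Counting\<close>

lemma card_pairs_le: "2 * card {(i, j). i \<le> j \<and> j < m} = m * (m + 1)"
proof (induction m)
  case (Suc m)
  have "finite {(i, j). i \<le> j \<and> j < m}"
    by (rule finite_subset[of _ "{..<m} \<times> {..<m}"]) auto
  moreover have "{(i, j). i \<le> j \<and> j < m} \<inter> (\<lambda>i. (i, m)) ` {..m} = {}"
    by auto
  ultimately have "card ({(i, j). i \<le> j \<and> j < m} \<union> (\<lambda>i. (i, m)) ` {..m}) =
      card {(i, j). i \<le> j \<and> j < m} + card ((\<lambda>i. (i, m)) ` {..m})"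
    by (intro card_Un_disjoint) auto
  moreover have "{(i, j). i \<le> j \<and> j < Suc m} = {(i, j). i \<le> j \<and> j < m} \<union> (\<lambda>i. (i, m)) ` {..m}"
    by auto
  moreover have "card ((\<lambda>i. (i, m)) ` {..m}) = Suc m"
    by (subst card_image) (auto simp: inj_on_def)
  ultimately show ?case
    using Suc.IH by simp
qed simp

lemma card_pairs_less_Suc: "card {(i, j). i < j \<and> j < Suc m} = card {(i, j). i \<le> j \<and> j < m}"
proof -
  have "bij_betw (\<lambda>(i, j). (i, j - 1)) {(i, j). i < j \<and> j < Suc m} {(i, j). i \<le> j \<and> j < m}"
    by (rule bij_betw_byWitness[where f' = "\<lambda>(i, j). (i, Suc j)"]) auto
  then show ?thesis
    by (rule bij_betw_same_card)
qed

lemma p_count_height_pred: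
  assumes "0 < n"
  shows "p_count n (n - 1) = card {(i, j). i \<le> j \<and> j < n - 1}"
  unfolding p_count_def
proof (rule card_quotient_eq_card_index[OF equiv_iso_rel])
  show "(\<lambda>(i, j). chain_with_point n i j) ` {(i, j). i \<le> j \<and> j < n - 1} \<subseteq> posets_nl n (n - 1)"
    unfolding posets_nl_def using chain_with_point_is_poset height_chain_with_point by auto
next
  fix le assume "le \<in> posets_nl n (n - 1)"
  then obtain i j where "i \<le> j" "j < n - 1" "isomorphic {0..<n} le {0..<n} (chain_with_point n i j)"
    using assms by (auto simp: posets_nl_def elim: isomorphic_chain_with_point[of "{0..<n}" le n])
  then show "\<exists>p\<in>{(i, j). i \<le> j \<and> j < n - 1}. (le, (\<lambda>(i, j). chain_with_point n i j) p) \<in> iso_rel n"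
    unfolding iso_rel_def by (intro bexI[of _ "(i, j)"]) auto
next
  fix p q
  assume "p \<in> {(i, j). i \<le> j \<and> j < n - 1}" "q \<in> {(i, j). i \<le> j \<and> j < n - 1}"
    "((\<lambda>(i, j). chain_with_point n i j) p, (\<lambda>(i, j). chain_with_point n i j) q) \<in> iso_rel n"
  then show "p = q"
    by (auto simp: iso_rel_def isomorphic_chain_with_point_iff)
qed

lemma u_count_height_pred:
  assumes "0 < n"
  shows "u_count n (n - 1) = card {(i, j). i < j \<and> j < n - 1}"
  unfolding u_count_def
proof (rule card_quotient_eq_card_index[OF equiv_iso_rel])
  show "(\<lambda>(i, j). chain_with_point n i j) ` {(i, j). i < j \<and> j < n - 1} \<subseteq>
      {le \<in> posets_nl n (n - 1). locally_unsymmetric {0..<n} le}"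
  proof
    fix le assume "le \<in> (\<lambda>(i, j). chain_with_point n i j) ` {(i, j). i < j \<and> j < n - 1}"
    then obtain i j where ij: "i < j" "j < n - 1" and "le = chain_with_point n i j"
      by auto
    moreover have "locally_unsymmetric {0..<n} (chain_with_point n i j)"
      by (rule rigid_locally_unsymmetric) (rule chain_with_point_rigid[OF ij])
    ultimately show "le \<in> {le \<in> posets_nl n (n - 1). locally_unsymmetric {0..<n} le}"
      unfolding posets_nl_def
      using chain_with_point_is_poset[of i j n] height_chain_with_point[of i j n] ij by simp
  qed
next
  fix le assume le: "le \<in> {le \<in> posets_nl n (n - 1). locally_unsymmetric {0..<n} le}"
  then obtain i j where "i \<le> j" "j < n - 1" and iso: "isomorphic {0..<n} le {0..<n} (chain_with_point n i j)"
    using assms by (auto simp: posets_nl_def elim: isomorphic_chain_with_point[of "{0..<n}" le n])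
  moreover have "i \<noteq> j"
    using locally_symmetric_if_isomorphic_chain_with_point[of "{0..<n}" le i n] iso le \<open>j < n - 1\<close>
    unfolding posets_nl_def locally_unsymmetric_def by auto
  ultimately show "\<exists>p\<in>{(i, j). i < j \<and> j < n - 1}. (le, (\<lambda>(i, j). chain_with_point n i j) p) \<in> iso_rel n"
    unfolding iso_rel_def by (intro bexI[of _ "(i, j)"]) auto
next
  fix p q
  assume "p \<in> {(i, j). i < j \<and> j < n - 1}" "q \<in> {(i, j). i < j \<and> j < n - 1}"
    "((\<lambda>(i, j). chain_with_point n i j) p, (\<lambda>(i, j). chain_with_point n i j) q) \<in> iso_rel n"
  then show "p = q"
    by (auto simp: iso_rel_def isomorphic_chain_with_point_iff)
qed

theorem mainTheorem13:
  fixes n :: nat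
  assumes "1 \<le> n"
  shows "real (p_count n (n - 1)) = real n * (real n - 1) / 2 \<and>
         real (u_count n (n - 1)) = (real n - 1) * (real n - 2) / 2"
proof (cases "n = 1")
  case True
  have "height {0..<1} le \<noteq> 0" if "is_poset {0..<1} le" for le :: "nat \<Rightarrow> nat \<Rightarrow> bool"
    using height_pos[of "{0..<1}" 0 le] that unfolding is_poset_def by auto
  then have "posets_nl 1 0 = {}"
    unfolding posets_nl_def by auto
  with True show ?thesis
    by (simp add: p_count_def u_count_def)
next
  case False
  with assms have "2 \<le> n"
    by simp
  have "2 * p_count n (n - 1) = (n - 1) * n"
    using p_count_height_pred[of n] card_pairs_le[of "n - 1"] \<open>2 \<le> n\<close> by simp
  then have p: "2 * real (p_count n (n - 1)) = (real n - 1) * real n"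
    using \<open>2 \<le> n\<close> by (metis of_nat_1 of_nat_diff of_nat_mult of_nat_numeral le_trans one_le_numeral)
  have "2 * u_count n (n - 1) = (n - 2) * (n - 1)"
    using u_count_height_pred[of n] card_pairs_less_Suc[of "n - 2"] card_pairs_le[of "n - 2"]
      \<open>2 \<le> n\<close> by (simp add: Suc_diff_Suc numeral_2_eq_2)
  then have u: "2 * real (u_count n (n - 1)) = (real n - 2) * (real n - 1)"
    using \<open>2 \<le> n\<close> by (metis of_nat_1 of_nat_diff of_nat_mult of_nat_numeral le_trans one_le_numeral)
  from p u show ?thesis
    by (simp add: field_simps)
qed

end
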